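(* Let $\mathbb G$ be a special 2-group and $(n,\rho,\beta,c)$, $(n',\rho',\beta',c')$ admissible quadruples. If $(\mathbf R,s):n\to n'$ is the 1-morphism of $\mathbf{2Mat}_{\mathbb C}$ underlying a 1-intertwiner $\mathcal F(n,\rho,\beta,c)\to\mathcal F(n',\rho',\beta',c')$, then (i) $\mathbf R$ is $(\rho,\rho')$-invariant, i.e. $R_{\rho'(g)(i'),\rho(g)(i)}=R_{i'i}$ for all $i',i$ and $g\in\pi_0(\mathbb G)$; and (ii) $\mathrm{Sup}(\mathbf R)\subseteq I(\beta,\beta')$. In particular the support of any 1-intertwiner is a union of intertwining $\pi_0(\mathbb G)$-orbits of $M(n',n)$. Consequently, if $I(\beta,\beta')=\emptyset$, the category of 1-intertwiners and 2-intertwiners from $\mathcal F(n,\rho,\beta,c)$ to $\mathcal F(n',\rho',\beta',c')$ is terminal.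
   Context: A special 2-group $\mathbb G$: skeletal monoidal groupoid, strictly invertible objects, $l,r$ identities; objects form $\pi_0(\mathbb G)$; $\pi_1(\mathbb G)=\mathrm{Aut}(e)$ is a $\pi_0(\mathbb G)$-module via $g\cdot u=\gamma_g^{-1}(\delta_g(u))$, $\gamma_g(u)=u\otimes\mathrm{id}_g$, $\delta_g(u)=\mathrm{id}_g\otimes u$; canonical 3-cocycle $\alpha(g_1,g_2,g_3)=\gamma^{-1}_{g_1g_2g_3}(a_{g_1,g_2,g_3})$. $\mathbf{2Mat}_{\mathbb C}$: objects $n\ge0$; for $n,m\ge1$ a 1-morphism $n\to m$ is $(\mathbf R,s)$, $\mathbf R$ an $m\times n$ matrix over $\mathbb N$, $s=(s_i)$ a gauge with $s_i(\mathbf a)\in GL((\mathbf R\mathbf a)_i,\mathbb C)$ for $\mathbf a\in\mathbb N^n$ ($=1$ if $(\mathbf R\mathbf a)_i=0$), $s_i(\mathbf e_j)=\mathbf I_{R_{ij}}$; a 2-morphism $(\mathbf R,s)\Rightarrow(\mathbf R',s')$ is an $m\times n$ array with $(i,j)$ entry an $R'_{ij}\times R_{ij}$ complex matrix if $R_{ij},R'_{ij}\ne0$, empty otherwise; vertical composition entrywise product; composition $(\tilde{\mathbf R},\tilde s)\circ(\mathbf R,s)=(\tilde{\mathbf R}\mathbf R,\tilde s\ast s)$, $(\tilde s\ast s)_k(\mathbf a)=\tilde s_k(\mathbf R\mathbf a)\big(\bigoplus_{i}\mathbf I_{\tilde R_{ki}}\otimes s_i(\mathbf a)\big)\mathbf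 P(\tilde{\mathbf R}_k,\mathbf R,\mathbf a)\big(\bigoplus_j \tilde s_k(\mathbf R\mathbf e_j)^{-1}\otimes\mathbf I_{a_j}\big)$, $\mathbf P(\cdot)$ fixed permutation matrices of the construction (identities when $\tilde{\mathbf R}_k$ or $\mathbf a$ is a standard basis vector, $\mathbf R$ an identity, or $\mathbf R$ one column); horizontal composition $(\tilde{\mathsf T}\circ\mathsf T)_{kj}=\tilde s'_k(\mathbf R'\mathbf e_j)\big(\bigoplus_i\tilde{\mathsf T}_{ki}\otimes\mathsf T_{ij}\big)\tilde s_k(\mathbf R\mathbf e_j)^{-1}$; identities $(\mathbf I_n,\mathbf I)$ with trivial gauge $\mathbf I$. Representations: a 2-matrix representation is $(n,\mathbb F)$ with $\mathbb F=(F,F_2,F_0):\mathbb G\to\mathsf{Equiv}_{\mathbf{2Mat}_{\mathbb C}}(n)$ monoidal; a 1-intertwiner $(n,\mathbb F)\to(n',\mathbb F')$ is $(f,\Phi)$, $f:n\to n'$, invertible $\Phi(A):F'(A)\circ f\Rightarrow f\circ F(A)$ natural in $A$, with $\Phi(A\otimes B)\cdot(F'_2(A,B)\circ1_f)=(1_f\circ F_2(A,B))\cdot(\Phi(A)\circ1_{F(B)})\cdot(1_{F'(A)}\circ\Phi(B))$ and $F'_0\circ1_f=(1_f\circ F_0)\cdot\Phi(I)$; a 2-intertwiner $(f,\Phi)\Rightarrow(g,\Psi)$ is $\tau:f\Rightarrow g$ with $\Psi(A)\cdot(1_{F'(A)}\circ\tau)=(\tau\circ1_{F(A)})\cdot\Phi(A)$.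 $\mathbf P(\sigma)_{ij}=\delta_{i,\sigma(j)}$; $(\sigma\cdot\boldsymbol\lambda)_i=\lambda_{\sigma^{-1}(i)}$. Admissible quadruple $(n,\rho,\beta,c)$: $n\ge1$, $\rho:\pi_0(\mathbb G)\to S_n$ homomorphism, $\beta:\pi_1(\mathbb G)\to(\mathbb C^* )^n_\rho$ module homomorphism with $[\beta\circ\alpha]=0$, $c$ normalized 2-cochain in $(\mathbb C^* )^n_\rho$ with $\partial c=\beta\circ\alpha$. $\mathcal F(n,\rho,\beta,c)=(n,\mathbb F)$ with $F(g)=(\mathbf P(\rho(g)),\mathbf I)$, $F(\varphi)$ for $\varphi\in\mathrm{Aut}(g)$ having only nonempty entries $\beta(\gamma_g^{-1}\varphi)_{\rho(g)(j)}$ at $(\rho(g)(j),j)$, $F_2(g_1,g_2)$ with only nonempty entries $c(g_1,g_2)_{\rho(g_1g_2)(j)}$ at $(\rho(g_1g_2)(j),j)$, $F_0$ identity. $M(n',n)=\{1..n'\}\times\{1..n\}$, right action $(i',i)\cdot g=(\rho'(g)^{-1}(i'),\rho(g)^{-1}(i))$; $I(\beta,\beta')=\{(i',i):\beta'_{i'}=\beta_i\}$; an orbit is intertwining if contained in $I(\beta,\beta')$; $\mathrm{Sup}(\mathbf R)=\{(i',i):R_{i'i}\ne0\}$. A category is terminal if it has one object and one morphism. *)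

theory Defs
  imports Complex_Main "Jordan_Normal_Form.Matrix" "HOL-Combinatorics.Permutations"
begin

text \<open>A skeletal monoidal groupoid: objects are the elements of type 'g, morphisms live
in type 'm; since the groupoid is skeletal every morphism is an automorphism, and
aut g is the set of automorphisms of the object g.\<close>

record ('g,'m) two_group =
  omul :: "'g \<Rightarrow> 'g \<Rightarrow> 'g"
  oone :: 'g
  oinv :: "'g \<Rightarrow> 'g"
  aut :: "'g \<Rightarrow> 'm set"
  mcomp :: "'m \<Rightarrow> 'm \<Rightarrow> 'm"
  mid :: "'g \<Rightarrow> 'm"
  mtens :: "'m \<Rightarrow> 'm \<Rightarrow> 'm"
  massoc :: "'g \<Rightarrow> 'g \<Rightarrow> 'g \<Rightarrow> 'm"

definition special_2group :: "('g,'m) two_group \<Rightarrow> bool" where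
  "special_2group G \<longleftrightarrow>
    \<comment> \<open>objects: strictly associative, strict unit, strictly invertible objects\<close>
    (\<forall>x y z. omul G (omul G x y) z = omul G x (omul G y z)) \<and>
    (\<forall>x. omul G (oone G) x = x \<and> omul G x (oone G) = x) \<and>
    (\<forall>x. omul G x (oinv G x) = oone G \<and> omul G (oinv G x) x = oone G) \<and>
    \<comment> \<open>skeletal groupoid\<close>
    (\<forall>x y. x \<noteq> y \<longrightarrow> aut G x \<inter> aut G y = {}) \<and>
    (\<forall>x. mid G x \<in> aut G x) \<and>
    (\<forall>x. \<forall>\<phi>\<in>aut G x. \<forall>\<psi>\<in>aut G x. mcomp G \<psi> \<phi> \<in> aut G x) \<and>
    (\<forall>x. \<forall>\<phi>\<in>aut G x. \<forall>\<psi>\<in>aut G x. \<forall>\<chi>\<in>aut G x.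
        mcomp G \<chi> (mcomp G \<psi> \<phi>) = mcomp G (mcomp G \<chi> \<psi>) \<phi>) \<and>
    (\<forall>x. \<forall>\<phi>\<in>aut G x. mcomp G (mid G x) \<phi> = \<phi> \<and> mcomp G \<phi> (mid G x) = \<phi>) \<and>
    (\<forall>x. \<forall>\<phi>\<in>aut G x. \<exists>\<psi>\<in>aut G x. mcomp G \<psi> \<phi> = mid G x \<and> mcomp G \<phi> \<psi> = mid G x) \<and>
    \<comment> \<open>tensor product is a functor\<close>
    (\<forall>x y. \<forall>\<phi>\<in>aut G x. \<forall>\<psi>\<in>aut G y. mtens G \<phi> \<psi> \<in> aut G (omul G x y)) \<and>
    (\<forall>x y. mtens G (mid G x) (mid G y) = mid G (omul G x y)) \<and>
    (\<forall>x y. \<forall>\<phi>\<in>aut G x. \<forall>\<phi>'\<in>aut G x. \<forall>\<psi>\<in>aut G y. \<forall>\<psi>'\<in>aut G y.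
        mtens G (mcomp G \<phi>' \<phi>) (mcomp G \<psi>' \<psi>) = mcomp G (mtens G \<phi>' \<psi>') (mtens G \<phi> \<psi>)) \<and>
    \<comment> \<open>associator: natural isomorphism satisfying the pentagon\<close>
    (\<forall>x y z. massoc G x y z \<in> aut G (omul G (omul G x y) z)) \<and>
    (\<forall>x y z. \<forall>\<phi>\<in>aut G x. \<forall>\<psi>\<in>aut G y. \<forall>\<chi>\<in>aut G z.
        mcomp G (massoc G x y z) (mtens G (mtens G \<phi> \<psi>) \<chi>)
        = mcomp G (mtens G \<phi> (mtens G \<psi> \<chi>)) (massoc G x y z)) \<and>
    (\<forall>w x y z.
        mcomp G (mtens G (mid G w) (massoc G x y z))
          (mcomp G (massoc G w (omul G x y) z) (mtens G (massoc G w x y) (mid G z)))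
        = mcomp G (massoc G w x (omul G y z)) (massoc G (omul G w x) y z)) \<and>
    \<comment> \<open>left and right unitors are identities (naturality and triangle axiom)\<close>
    (\<forall>x. \<forall>\<phi>\<in>aut G x. mtens G (mid G (oone G)) \<phi> = \<phi> \<and> mtens G \<phi> (mid G (oone G)) = \<phi>) \<and>
    (\<forall>x y. mcomp G (mtens G (mid G x) (mid G y)) (massoc G x (oone G) y)
             = mtens G (mid G x) (mid G y))"

definition pi1 :: "('g,'m) two_group \<Rightarrow> 'm set" where
  "pi1 G = aut G (oone G)"

definition gam :: "('g,'m) two_group \<Rightarrow> 'g \<Rightarrow> 'm \<Rightarrow> 'm" where
  "gam G g u = mtens G u (mid G g)"

definition del :: "('g,'m) two_group \<Rightarrow> 'g \<Rightarrow> 'm \<Rightarrow> 'm" where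
  "del G g u = mtens G (mid G g) u"

definition gaminv :: "('g,'m) two_group \<Rightarrow> 'g \<Rightarrow> 'm \<Rightarrow> 'm" where
  "gaminv G g \<phi> = the_inv_into (pi1 G) (gam G g) \<phi>"

definition act :: "('g,'m) two_group \<Rightarrow> 'g \<Rightarrow> 'm \<Rightarrow> 'm" where
  "act G g u = gaminv G g (del G g u)"

definition alpha :: "('g,'m) two_group \<Rightarrow> 'g \<Rightarrow> 'g \<Rightarrow> 'g \<Rightarrow> 'm" where
  "alpha G g1 g2 g3 = gaminv G (omul G (omul G g1 g2) g3) (massoc G g1 g2 g3)"

text \<open>Indices are 0-based: \<open>{1..n}\<close> of the paper is \<open>{0..<n}\<close>. Elements of
\<open>(\<complex>\<^sup>*)\<^sup>n\<close> are functions \<open>nat \<Rightarrow> complex\<close>, only the values below n matter.\<close>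

definition coboundary :: "('g,'m) two_group \<Rightarrow> ('g \<Rightarrow> nat \<Rightarrow> nat)
     \<Rightarrow> ('g \<Rightarrow> 'g \<Rightarrow> nat \<Rightarrow> complex) \<Rightarrow> 'g \<Rightarrow> 'g \<Rightarrow> 'g \<Rightarrow> nat \<Rightarrow> complex" where
  "coboundary G \<rho> c g1 g2 g3 i =
     c g2 g3 (Hilbert_Choice.inv (\<rho> g1) i) * c g1 (omul G g2 g3) i / c (omul G g1 g2) g3 i / c g1 g2 i"

definition normalized_cochain :: "('g,'m) two_group \<Rightarrow> nat \<Rightarrow> ('g \<Rightarrow> 'g \<Rightarrow> nat \<Rightarrow> complex) \<Rightarrow> bool" where
  "normalized_cochain G n c \<longleftrightarrow>
     (\<forall>g h. \<forall>i<n. c g h i \<noteq> 0) \<and> (\<forall>g. \<forall>i<n. c (oone G) g i = 1 \<and> c g (oone G) i = 1)"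

definition admissible :: "('g,'m) two_group \<Rightarrow> nat \<Rightarrow> ('g \<Rightarrow> nat \<Rightarrow> nat)
     \<Rightarrow> ('m \<Rightarrow> nat \<Rightarrow> complex) \<Rightarrow> ('g \<Rightarrow> 'g \<Rightarrow> nat \<Rightarrow> complex) \<Rightarrow> bool" where
  "admissible G n \<rho> \<beta> c \<longleftrightarrow>
     n \<ge> 1 \<and>
     \<comment> \<open>\<rho> is a homomorphism into \<open>S\<^sub>n\<close>\<close>
     (\<forall>g. \<rho> g permutes {..<n}) \<and> (\<forall>g h. \<rho> (omul G g h) = \<rho> g \<circ> \<rho> h) \<and>
     \<comment> \<open>\<beta> is a module homomorphism \<open>\<pi>\<^sub>1 \<rightarrow> (\<complex>\<^sup>*)\<^sup>n\<^sub>\<rho>\<close>\<close>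
     (\<forall>u\<in>pi1 G. \<forall>i<n. \<beta> u i \<noteq> 0) \<and>
     (\<forall>u\<in>pi1 G. \<forall>v\<in>pi1 G. \<forall>i<n. \<beta> (mcomp G u v) i = \<beta> u i * \<beta> v i) \<and>
     (\<forall>g. \<forall>u\<in>pi1 G. \<forall>i<n. \<beta> (act G g u) i = \<beta> u (Hilbert_Choice.inv (\<rho> g) i)) \<and>
     \<comment> \<open>\<open>[\<beta>\<circ>\<alpha>] = 0\<close>\<close>
     (\<exists>c'. normalized_cochain G n c' \<and>
        (\<forall>g1 g2 g3. \<forall>i<n. coboundary G \<rho> c' g1 g2 g3 i = \<beta> (alpha G g1 g2 g3) i)) \<and>
     \<comment> \<open>c is normalized with \<open>\<partial>c = \<beta>\<circ>\<alpha>\<close>\<close>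
     normalized_cochain G n c \<and>
     (\<forall>g1 g2 g3. \<forall>i<n. coboundary G \<rho> c g1 g2 g3 i = \<beta> (alpha G g1 g2 g3) i)"

type_synonym gauge = "nat \<Rightarrow> nat vec \<Rightarrow> complex mat"
type_synonym mor1 = "nat mat \<times> gauge"
type_synonym arr = "nat \<Rightarrow> nat \<Rightarrow> complex mat"

definition permmat :: "nat \<Rightarrow> (nat \<Rightarrow> nat) \<Rightarrow> 'a :: zero_neq_one mat" where
  "permmat n \<sigma> = mat n n (\<lambda>(i,j). if i = \<sigma> j then 1 else 0)"

definition kron :: "'a :: semiring_0 mat \<Rightarrow> 'a mat \<Rightarrow> 'a mat" where
  "kron A B = mat (dim_row A * dim_row B) (dim_col A * dim_col B)
     (\<lambda>(i,j). A $$ (i div dim_row B, j div dim_col B) * B $$ (i mod dim_row B, j mod dim_col B))"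

fun block_diag :: "'a :: zero mat list \<Rightarrow> 'a mat" where
  "block_diag [] = 0\<^sub>m 0 0"
| "block_diag (A # As) = (let B = block_diag As in
     four_block_mat A (0\<^sub>m (dim_row A) (dim_col B)) (0\<^sub>m (dim_row B) (dim_col A)) B)"

definition matinv :: "complex mat \<Rightarrow> complex mat" where
  "matinv A = (SOME B. B \<in> carrier_mat (dim_row A) (dim_row A) \<and> inverts_mat A B \<and> inverts_mat B A)"

text \<open>1-morphisms \<open>n \<rightarrow> m\<close>: gauges are extensional (value \<open>1\<^sub>m 0\<close> outside their domain).\<close>

definition is_1mor :: "nat \<Rightarrow> nat \<Rightarrow> mor1 \<Rightarrow> bool" where
  "is_1mor n m f \<longleftrightarrow> (case f of (R, s) \<Rightarrow>
     R \<in> carrier_mat m n \<and>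
     (\<forall>i<m. \<forall>a\<in>carrier_vec n.
        s i a \<in> carrier_mat ((R *\<^sub>v a) $ i) ((R *\<^sub>v a) $ i) \<and> invertible_mat (s i a)) \<and>
     (\<forall>i<m. \<forall>j<n. s i (unit_vec n j) = 1\<^sub>m (R $$ (i,j))) \<and>
     (\<forall>i a. \<not> (i < m \<and> a \<in> carrier_vec n) \<longrightarrow> s i a = 1\<^sub>m 0))"

definition triv_gauge :: "nat mat \<Rightarrow> gauge" where
  "triv_gauge R i a = (if i < dim_row R \<and> a \<in> carrier_vec (dim_col R)
                       then 1\<^sub>m ((R *\<^sub>v a) $ i) else 1\<^sub>m 0)"

definition id1 :: "nat \<Rightarrow> mor1" where
  "id1 n = (1\<^sub>m n, triv_gauge (1\<^sub>m n))"

text \<open>The fixed permutation matrices \<open>P(R\<^sub>k, R, a)\<close> of the construction are a parameter PP,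
subject to the properties stated in the paper.\<close>

definition PP_ok :: "(nat vec \<Rightarrow> nat mat \<Rightarrow> nat vec \<Rightarrow> complex mat) \<Rightarrow> bool" where
  "PP_ok PP \<longleftrightarrow> (\<forall>m n rk R a. rk \<in> carrier_vec m \<longrightarrow> R \<in> carrier_mat m n \<longrightarrow> a \<in> carrier_vec n \<longrightarrow>
     (let d = rk \<bullet> (R *\<^sub>v a) in
       (\<exists>\<sigma>. \<sigma> permutes {..<d} \<and> PP rk R a = permmat d \<sigma>) \<and>
       ((\<exists>i<m. rk = unit_vec m i) \<or> (\<exists>j<n. a = unit_vec n j) \<or> (m = n \<and> R = 1\<^sub>m m) \<or> n = 1
          \<longrightarrow> PP rk R a = 1\<^sub>m d)))"

definition gauge_comp :: "(nat vec \<Rightarrow> nat mat \<Rightarrow> nat vec \<Rightarrow> complex mat)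
     \<Rightarrow> nat mat \<Rightarrow> gauge \<Rightarrow> nat mat \<Rightarrow> gauge \<Rightarrow> gauge" where
  "gauge_comp PP Rt st R s k a =
     (if k < dim_row Rt \<and> a \<in> carrier_vec (dim_col R) then
        st k (R *\<^sub>v a)
        * block_diag (map (\<lambda>i. kron (1\<^sub>m (Rt $$ (k,i))) (s i a)) [0..<dim_col Rt])
        * PP (row Rt k) R a
        * block_diag (map (\<lambda>j. kron (matinv (st k (col R j))) (1\<^sub>m (a $ j))) [0..<dim_col R])
      else 1\<^sub>m 0)"

text \<open>Composition of 1-morphisms: \<open>comp1 PP ft f = ft \<circ> f\<close>.\<close>

definition comp1 :: "(nat vec \<Rightarrow> nat mat \<Rightarrow> nat vec \<Rightarrow> complex mat) \<Rightarrow> mor1 \<Rightarrow> mor1 \<Rightarrow> mor1" where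
  "comp1 PP ft f = (fst ft * fst f, gauge_comp PP (fst ft) (snd ft) (fst f) (snd f))"

definition is_2mor :: "nat \<Rightarrow> nat \<Rightarrow> nat mat \<Rightarrow> nat mat \<Rightarrow> arr \<Rightarrow> bool" where
  "is_2mor m n R R' T \<longleftrightarrow>
     (\<forall>i j. (i < m \<and> j < n \<longrightarrow> T i j \<in> carrier_mat (R' $$ (i,j)) (R $$ (i,j))) \<and>
            (\<not> (i < m \<and> j < n) \<longrightarrow> T i j = 0\<^sub>m 0 0))"

definition id2 :: "nat mat \<Rightarrow> arr" where
  "id2 R i j = (if i < dim_row R \<and> j < dim_col R then 1\<^sub>m (R $$ (i,j)) else 0\<^sub>m 0 0)"

text \<open>Vertical composition \<open>vcomp T' T = T' \<cdot> T\<close> (first T, then T').\<close>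

definition vcomp :: "arr \<Rightarrow> arr \<Rightarrow> arr" where
  "vcomp T' T i j = T' i j * T i j"

definition inv2 :: "nat \<Rightarrow> nat \<Rightarrow> nat mat \<Rightarrow> nat mat \<Rightarrow> arr \<Rightarrow> bool" where
  "inv2 m n R R' T \<longleftrightarrow> (\<exists>T'. is_2mor m n R' R T' \<and> vcomp T' T = id2 R \<and> vcomp T T' = id2 R')"

text \<open>Horizontal composition of \<open>Tt : ft \<Rightarrow> ft'\<close> (outer) with \<open>T : f \<Rightarrow> f'\<close> (inner).\<close>

definition hcomp :: "mor1 \<Rightarrow> mor1 \<Rightarrow> mor1 \<Rightarrow> mor1 \<Rightarrow> arr \<Rightarrow> arr \<Rightarrow> arr" where
  "hcomp ft ft' f f' Tt T k j =
     (if k < dim_row (fst ft) \<and> j < dim_col (fst f) then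
        snd ft' k (col (fst f') j)
        * block_diag (map (\<lambda>i. kron (Tt k i) (T i j)) [0..<dim_col (fst ft)])
        * matinv (snd ft k (col (fst f) j))
      else 0\<^sub>m 0 0)"

text \<open>Data of a 2-matrix representation \<open>(n, (F, F\<^sub>2, F\<^sub>0))\<close>: robj g = F(g), rmor g \<phi> = F(\<phi>)
for \<open>\<phi> \<in> Aut(g)\<close>, rF2 g h = \<open>F\<^sub>2(g,h)\<close>, rF0 = \<open>F\<^sub>0\<close>.\<close>

record ('g,'m) rep2 =
  rdim :: nat
  robj :: "'g \<Rightarrow> mor1"
  rmor :: "'g \<Rightarrow> 'm \<Rightarrow> arr"
  rF2 :: "'g \<Rightarrow> 'g \<Rightarrow> arr"
  rF0 :: arr

definition Frep :: "('g,'m) two_group \<Rightarrow> nat \<Rightarrow> ('g \<Rightarrow> nat \<Rightarrow> nat)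
     \<Rightarrow> ('m \<Rightarrow> nat \<Rightarrow> complex) \<Rightarrow> ('g \<Rightarrow> 'g \<Rightarrow> nat \<Rightarrow> complex) \<Rightarrow> ('g,'m) rep2" where
  "Frep G n \<rho> \<beta> c =
     \<lparr> rdim = n,
       robj = (\<lambda>g. (permmat n (\<rho> g), triv_gauge (permmat n (\<rho> g)))),
       rmor = (\<lambda>g \<phi> i j. if i < n \<and> j < n \<and> i = \<rho> g j
                          then mat 1 1 (\<lambda>_. \<beta> (gaminv G g \<phi>) i) else 0\<^sub>m 0 0),
       rF2 = (\<lambda>g h i j. if i < n \<and> j < n \<and> i = \<rho> (omul G g h) j
                          then mat 1 1 (\<lambda>_. c g h i) else 0\<^sub>m 0 0),
       rF0 = id2 (1\<^sub>m n) \<rparr>"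

text \<open>1-intertwiners \<open>(f,\<Phi>) : X \<rightarrow> Y\<close>, with \<open>\<Phi>(A) : F'(A) \<circ> f \<Rightarrow> f \<circ> F(A)\<close>.\<close>

definition one_int :: "(nat vec \<Rightarrow> nat mat \<Rightarrow> nat vec \<Rightarrow> complex mat) \<Rightarrow> ('g,'m) two_group
     \<Rightarrow> ('g,'m) rep2 \<Rightarrow> ('g,'m) rep2 \<Rightarrow> mor1 \<Rightarrow> ('g \<Rightarrow> arr) \<Rightarrow> bool" where
  "one_int PP G X Y f \<Phi> \<longleftrightarrow>
     is_1mor (rdim X) (rdim Y) f \<and>
     (\<forall>A. is_2mor (rdim Y) (rdim X) (fst (robj Y A) * fst f) (fst f * fst (robj X A)) (\<Phi> A) \<and>
          inv2 (rdim Y) (rdim X) (fst (robj Y A) * fst f) (fst f * fst (robj X A)) (\<Phi> A)) \<and>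
     \<comment> \<open>naturality\<close>
     (\<forall>A. \<forall>\<phi>\<in>aut G A.
        vcomp (\<Phi> A) (hcomp (robj Y A) (robj Y A) f f (rmor Y A \<phi>) (id2 (fst f)))
        = vcomp (hcomp f f (robj X A) (robj X A) (id2 (fst f)) (rmor X A \<phi>)) (\<Phi> A)) \<and>
     \<comment> \<open>compatibility with \<open>F\<^sub>2\<close>\<close>
     (\<forall>A B.
        vcomp (\<Phi> (omul G A B))
          (hcomp (comp1 PP (robj Y A) (robj Y B)) (robj Y (omul G A B)) f f (rF2 Y A B) (id2 (fst f)))
        = vcomp (hcomp f f (comp1 PP (robj X A) (robj X B)) (robj X (omul G A B)) (id2 (fst f)) (rF2 X A B))
           (vcomp (hcomp (comp1 PP (robj Y A) f) (comp1 PP f (robj X A)) (robj X B) (robj X B)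
                     (\<Phi> A) (id2 (fst (robj X B))))
                  (hcomp (robj Y A) (robj Y A) (comp1 PP (robj Y B) f) (comp1 PP f (robj X B))
                     (id2 (fst (robj Y A))) (\<Phi> B)))) \<and>
     \<comment> \<open>compatibility with \<open>F\<^sub>0\<close>\<close>
     hcomp (robj Y (oone G)) (id1 (rdim Y)) f f (rF0 Y) (id2 (fst f))
       = vcomp (hcomp f f (robj X (oone G)) (id1 (rdim X)) (id2 (fst f)) (rF0 X)) (\<Phi> (oone G))"

definition two_int :: "(nat vec \<Rightarrow> nat mat \<Rightarrow> nat vec \<Rightarrow> complex mat)
     \<Rightarrow> ('g,'m) rep2 \<Rightarrow> ('g,'m) rep2 \<Rightarrow> mor1 \<times> ('g \<Rightarrow> arr) \<Rightarrow> mor1 \<times> ('g \<Rightarrow> arr) \<Rightarrow> arr \<Rightarrow> bool" where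
  "two_int PP X Y x y \<tau> \<longleftrightarrow> (case x of (f, \<Phi>) \<Rightarrow> case y of (g, \<Psi>) \<Rightarrow>
     is_2mor (rdim Y) (rdim X) (fst f) (fst g) \<tau> \<and>
     (\<forall>A. vcomp (\<Psi> A) (hcomp (robj Y A) (robj Y A) f g (id2 (fst (robj Y A))) \<tau>)
          = vcomp (hcomp f g (robj X A) (robj X A) \<tau> (id2 (fst (robj X A)))) (\<Phi> A)))"

definition terminal_cat :: "'o set \<Rightarrow> ('o \<Rightarrow> 'o \<Rightarrow> 'h \<Rightarrow> bool) \<Rightarrow> bool" where
  "terminal_cat Obj Hom \<longleftrightarrow> (\<exists>!x. x \<in> Obj) \<and> (\<forall>x\<in>Obj. \<forall>y\<in>Obj. \<exists>!h. Hom x y h)"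

definition int_category_terminal :: "(nat vec \<Rightarrow> nat mat \<Rightarrow> nat vec \<Rightarrow> complex mat) \<Rightarrow> ('g,'m) two_group
     \<Rightarrow> ('g,'m) rep2 \<Rightarrow> ('g,'m) rep2 \<Rightarrow> bool" where
  "int_category_terminal PP G X Y =
     terminal_cat {(f, \<Phi>). one_int PP G X Y f \<Phi>} (two_int PP X Y)"

definition rho_invariant :: "('g \<Rightarrow> nat \<Rightarrow> nat) \<Rightarrow> ('g \<Rightarrow> nat \<Rightarrow> nat) \<Rightarrow> nat \<Rightarrow> nat \<Rightarrow> nat mat \<Rightarrow> bool" where
  "rho_invariant \<rho> \<rho>' n n' R \<longleftrightarrow>
     (\<forall>g. \<forall>i'<n'. \<forall>i<n. R $$ (\<rho>' g i', \<rho> g i) = R $$ (i', i))"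

definition Supp :: "nat mat \<Rightarrow> (nat \<times> nat) set" where
  "Supp R = {(i', i). i' < dim_row R \<and> i < dim_col R \<and> R $$ (i', i) \<noteq> 0}"

definition Mset :: "nat \<Rightarrow> nat \<Rightarrow> (nat \<times> nat) set" where
  "Mset n' n = {..<n'} \<times> {..<n}"

definition Iset :: "('g,'m) two_group \<Rightarrow> nat \<Rightarrow> nat \<Rightarrow> ('m \<Rightarrow> nat \<Rightarrow> complex) \<Rightarrow> ('m \<Rightarrow> nat \<Rightarrow> complex)
     \<Rightarrow> (nat \<times> nat) set" where
  "Iset G n n' \<beta> \<beta>' = {(i', i). i' < n' \<and> i < n \<and> (\<forall>u\<in>pi1 G. \<beta>' u i' = \<beta> u i)}"

definition orbit :: "('g \<Rightarrow> nat \<Rightarrow> nat) \<Rightarrow> ('g \<Rightarrow> nat \<Rightarrow> nat) \<Rightarrow> nat \<times> nat \<Rightarrow> (nat \<times> nat) set" where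
  "orbit \<rho> \<rho>' x = {(Hilbert_Choice.inv (\<rho>' g) (fst x), Hilbert_Choice.inv (\<rho> g) (snd x)) | g. True}"

definition union_of_intertwining_orbits :: "('g \<Rightarrow> nat \<Rightarrow> nat) \<Rightarrow> ('g \<Rightarrow> nat \<Rightarrow> nat)
     \<Rightarrow> nat \<Rightarrow> nat \<Rightarrow> (nat \<times> nat) set \<Rightarrow> (nat \<times> nat) set \<Rightarrow> bool" where
  "union_of_intertwining_orbits \<rho> \<rho>' n n' I S \<longleftrightarrow>
     (\<exists>Xs \<subseteq> Mset n' n. (\<forall>x\<in>Xs. orbit \<rho> \<rho>' x \<subseteq> I) \<and> S = \<Union> (orbit \<rho> \<rho>' ` Xs))"

end

theory Submission
  imports Defs
begin

text \<open>
  An invertible 2-cell of \<open>2Mat\<^sub>\<complex>\<close> has square invertible components. Comparing the sizes of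
  the \<open>(\<rho>'(g)(i'), i)\<close> component of \<open>\<Phi>(g) : P(\<rho>'(g)) R \<Rightarrow> R P(\<rho>(g))\<close> therefore gives
  \<open>R(\<rho>'(g)(i'), \<rho>(g)(i)) = R(i', i)\<close>. At the unit object \<open>\<rho>(e) = id\<close>, and for \<open>u \<in> \<pi>\<^sub>1\<close>
  naturality of \<open>\<Phi>\<close> says that the invertible block \<open>\<Phi>(e)(i', i)\<close> of size \<open>R(i', i)\<close>
  intertwines the scalars \<open>\<beta>'(u)(i')\<close> and \<open>\<beta>(u)(i)\<close>, which must agree once the block is
  nonempty. Invariance makes the support a union of orbits. When \<open>I(\<beta>, \<beta>')\<close> is empty, R = 0,
  so every gauge value and every component of a 2-cell is an empty matrix and all coherence
  conditions hold trivially: there is exactly one 1-intertwiner, and its only endomorphism is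
  the empty array.
\<close>

lemma mat_inverse_dims_eq:
  fixes T T' :: "'a :: {comm_ring_1, ring_char_0} mat"
  assumes T: "T \<in> carrier_mat b a" and T': "T' \<in> carrier_mat a b"
    and left: "T' * T = 1\<^sub>m a" and right: "T * T' = 1\<^sub>m b"
  shows "a = b"
proof -
  have "of_nat a = (\<Sum>i<a. (T' * T) $$ (i, i))"
    using left by simp
  also have "\<dots> = (\<Sum>i<a. \<Sum>l<b. T' $$ (i, l) * T $$ (l, i))"
    using T T' by (auto simp: scalar_prod_def intro!: sum.cong sum.reindex_bij_witness[of _ id id])
  also have "\<dots> = (\<Sum>l<b. \<Sum>i<a. T $$ (l, i) * T' $$ (i, l))"
    by (subst sum.swap) (simp add: mult.commute)
  also have "\<dots> = (\<Sum>l<b. (T * T') $$ (l, l))"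
    using T T' by (auto simp: scalar_prod_def intro!: sum.cong sum.reindex_bij_witness[of _ id id])
  also have "\<dots> = of_nat b"
    using right by simp
  finally show ?thesis
    by simp
qed

lemma carrier_mat_0_0_eq: "A \<in> carrier_mat 0 0 \<Longrightarrow> B \<in> carrier_mat 0 0 \<Longrightarrow> A = B"
  by (rule eq_matI) auto

lemma matinv_one_mat: "matinv (1\<^sub>m d) = 1\<^sub>m d"
proof -
  have "matinv (1\<^sub>m d) \<in> carrier_mat d d \<and> inverts_mat (1\<^sub>m d) (matinv (1\<^sub>m d))"
    unfolding matinv_def index_one_mat by (rule someI2[of _ "1\<^sub>m d"]) (auto simp: inverts_mat_def)
  then show ?thesis
    by (auto simp: inverts_mat_def)
qed

lemma intertwined_scalars_eq:
  fixes P P' :: "'a :: field mat"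
  assumes P: "P \<in> carrier_mat r r" and P': "P' \<in> carrier_mat r r" and inv: "P' * P = 1\<^sub>m r"
    and r: "0 < r" and comm: "P * (b' \<cdot>\<^sub>m 1\<^sub>m r) = (b \<cdot>\<^sub>m 1\<^sub>m r) * P"
  shows "b' = b"
proof -
  have "b' \<cdot>\<^sub>m P = P * (b' \<cdot>\<^sub>m 1\<^sub>m r)"
    using mult_smult_distrib[OF P, of "1\<^sub>m r" r] P by simp
  also have "\<dots> = b \<cdot>\<^sub>m P"
    using comm mult_smult_assoc_mat[of "1\<^sub>m r" r r P] P by simp
  finally have "P' * (b' \<cdot>\<^sub>m P) = P' * (b \<cdot>\<^sub>m P)"
    by simp
  then have "b' \<cdot>\<^sub>m (P' * P) = b \<cdot>\<^sub>m (P' * P)"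
    using P P' by (simp add: mult_smult_distrib[OF P' P])
  then have "(b' \<cdot>\<^sub>m 1\<^sub>m r) $$ (0, 0) = (b \<cdot>\<^sub>m 1\<^sub>m r) $$ (0, 0)"
    using inv by simp
  then show ?thesis
    using r by simp
qed

lemma block_diag_Cons_0_0: "A \<in> carrier_mat 0 0 \<Longrightarrow> block_diag (A # As) = block_diag As"
  by (rule eq_matI) (auto simp: Let_def four_block_mat_def)

lemma block_diag_0_0: "\<forall>B\<in>set As. B \<in> carrier_mat 0 0 \<Longrightarrow> block_diag As = 0\<^sub>m 0 0"
  by (induction As) (auto simp: block_diag_Cons_0_0)

lemma block_diag_append_single:
  assumes "\<forall>B\<in>set As. B \<in> carrier_mat 0 0" and "\<forall>B\<in>set Bs. B \<in> carrier_mat 0 0"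
  shows "block_diag (As @ A # Bs) = A"
proof -
  have "block_diag (A # Bs) = A"
    using assms(2) by (simp add: block_diag_0_0 Let_def, intro eq_matI) (auto simp: four_block_mat_def Let_def)
  then show ?thesis
    using assms(1) by (induction As) (auto simp del: block_diag.simps simp: block_diag_Cons_0_0)
qed

lemma block_diag_map_single:
  assumes "k < m" and "\<And>i. i < m \<Longrightarrow> i \<noteq> k \<Longrightarrow> F i \<in> carrier_mat 0 0"
  shows "block_diag (map F [0..<m]) = F k"
proof -
  have "[0..<m] = [0..<k] @ k # [Suc k..<m]"
    using assms(1) by (metis upt_add_eq_append upt_conv_Cons le_add1 le_add_same_cancel1 less_imp_add_positive)
  then show ?thesis
    using assms by (simp add: block_diag_append_single)
qed

lemma dim_col_block_diag: "dim_col (block_diag As) = sum_list (map dim_col As)"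
  by (induction As) (auto simp: Let_def four_block_mat_def)

lemma kron_dims [simp]:
  "dim_row (kron A B) = dim_row A * dim_row B" "dim_col (kron A B) = dim_col A * dim_col B"
  by (simp_all add: kron_def)

lemma kron_0_0_left: "kron (0\<^sub>m 0 0) B \<in> carrier_mat 0 0"
  by (simp add: kron_def)

lemma kron_0_0_right: "kron A (0\<^sub>m 0 0) \<in> carrier_mat 0 0"
  by (simp add: kron_def)

lemma kron_scalar_one_mat:
  fixes b :: "'a :: semiring_1"
  shows "kron (mat 1 1 (\<lambda>_. b)) (1\<^sub>m r) = b \<cdot>\<^sub>m 1\<^sub>m r"
  by (rule eq_matI) (auto simp: kron_def)

lemma kron_one_mat_scalar:
  fixes b :: "'a :: semiring_1"
  shows "kron (1\<^sub>m r) (mat 1 1 (\<lambda>_. b)) = b \<cdot>\<^sub>m 1\<^sub>m r"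
  by (rule eq_matI) (auto simp: kron_def)

lemma permmat_id: "permmat n id = 1\<^sub>m n"
  by (rule eq_matI) (auto simp: permmat_def)

lemma permmat_carrier [simp]: "permmat n \<sigma> \<in> carrier_mat n n"
  by (simp add: permmat_def)

lemma permmat_dims [simp]: "dim_row (permmat n \<sigma>) = n" "dim_col (permmat n \<sigma>) = n"
  by (simp_all add: permmat_def)

lemma permmat_mult_carrier [simp]:
  "R \<in> carrier_mat m n \<Longrightarrow> permmat m \<sigma> * R \<in> carrier_mat m n"
  by (rule mult_carrier_mat[OF permmat_carrier])

lemma mult_permmat_carrier [simp]:
  "R \<in> carrier_mat m n \<Longrightarrow> R * permmat n \<sigma> \<in> carrier_mat m n"
  by (rule mult_carrier_mat[OF _ permmat_carrier])

lemma permmat_mult_index: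
  fixes R :: "'a :: semiring_1 mat"
  assumes \<sigma>: "\<sigma> permutes {..<m}" and R: "R \<in> carrier_mat m n" and i: "i < m" and j: "j < n"
  shows "(permmat m \<sigma> * R) $$ (\<sigma> i, j) = R $$ (i, j)"
proof -
  have "\<sigma> i < m"
    using permutes_in_image[OF \<sigma>] i by auto
  then have "(permmat m \<sigma> * R) $$ (\<sigma> i, j) = (\<Sum>l<m. (if \<sigma> i = \<sigma> l then 1 else 0) * R $$ (l, j))"
    using R j by (auto simp: scalar_prod_def permmat_def intro!: sum.reindex_bij_witness[of _ id id])
  also have "\<dots> = (\<Sum>l<m. if l = i then R $$ (l, j) else 0)"
    using permutes_inj[OF \<sigma>] by (intro sum.cong) (auto dest: injD)
  also have "\<dots> = R $$ (i, j)"
    using i by simp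
  finally show ?thesis .
qed

lemma mult_permmat_index:
  fixes R :: "'a :: semiring_1 mat"
  assumes \<tau>: "\<tau> permutes {..<n}" and R: "R \<in> carrier_mat m n" and k: "k < m" and j: "j < n"
  shows "(R * permmat n \<tau>) $$ (k, j) = R $$ (k, \<tau> j)"
proof -
  have "(R * permmat n \<tau>) $$ (k, j) = (\<Sum>l<n. R $$ (k, l) * (if l = \<tau> j then 1 else 0))"
    using R k j by (auto simp: scalar_prod_def permmat_def intro!: sum.reindex_bij_witness[of _ id id])
  also have "\<dots> = (\<Sum>l<n. if l = \<tau> j then R $$ (k, l) else 0)"
    by (intro sum.cong) auto
  also have "\<dots> = R $$ (k, \<tau> j)"
    using permutes_in_image[OF \<tau>] j by auto
  finally show ?thesis .
qed

section \<open>Empty arrays and zero 1-morphisms of \<open>2Mat\<^sub>\<complex>\<close>\<close>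

lemma col_zero_mat: "j < n \<Longrightarrow> col (0\<^sub>m m n :: 'a :: zero mat) j = 0\<^sub>v m"
  by (intro eq_vecI) auto

abbreviation zero_mor1 :: "nat \<Rightarrow> nat \<Rightarrow> mor1" where
  "zero_mor1 n' n \<equiv> (0\<^sub>m n' n, \<lambda>_ _. 1\<^sub>m 0)"

abbreviation empty_arr :: arr where
  "empty_arr \<equiv> \<lambda>_ _. 0\<^sub>m 0 0"

lemma is_1mor_zero_mor1: "is_1mor n n' (zero_mor1 n' n)"
proof -
  have "invertible_mat (1\<^sub>m 0 :: complex mat)"
    unfolding invertible_mat_def inverts_mat_def square_mat.simps
    by (intro conjI exI[of _ "1\<^sub>m 0"]) simp_all
  then show ?thesis
    by (simp add: is_1mor_def)
qed

lemma is_1mor_zero_gauge: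
  assumes f: "is_1mor n n' (0\<^sub>m n' n, s)"
  shows "s = (\<lambda>_ _. 1\<^sub>m 0)"
proof (intro ext)
  fix i a
  show "s i a = 1\<^sub>m 0"
  proof (cases "i < n' \<and> a \<in> carrier_vec n")
    case True
    then have "s i a \<in> carrier_mat ((0\<^sub>m n' n *\<^sub>v a) $ i) ((0\<^sub>m n' n *\<^sub>v a) $ i)"
      using f unfolding is_1mor_def by auto
    moreover have "(0\<^sub>m n' n *\<^sub>v a) $ i = 0"
      using True by simp
    ultimately show ?thesis
      by (intro carrier_mat_0_0_eq) auto
  next
    case False
    then show ?thesis
      using f unfolding is_1mor_def by auto
  qed
qed

lemma is_2mor_zero_iff: "is_2mor m n (0\<^sub>m m n) (0\<^sub>m m n) T \<longleftrightarrow> T = empty_arr"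
  unfolding is_2mor_def by (fastforce intro: carrier_mat_0_0_eq)

lemma inv2_empty_arr: "inv2 m n (0\<^sub>m m n) (0\<^sub>m m n) empty_arr"
proof -
  have "vcomp empty_arr empty_arr = id2 (0\<^sub>m m n :: nat mat)"
    unfolding vcomp_def id2_def by (intro ext carrier_mat_0_0_eq) auto
  then show ?thesis
    unfolding inv2_def using is_2mor_zero_iff by blast
qed

lemma Supp_empty_imp_zero: "R \<in> carrier_mat m n \<Longrightarrow> Supp R = {} \<Longrightarrow> R = 0\<^sub>m m n"
  unfolding Supp_def by (intro eq_matI) auto

lemma empty_arrI: "(\<And>k j. dim_row (T k j) = 0) \<Longrightarrow> (\<And>k j. dim_col (T k j) = 0) \<Longrightarrow> T = empty_arr"
  by (intro ext carrier_mat_0_0_eq) auto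

lemma vcomp_dims [simp]:
  "dim_row (vcomp T U k j) = dim_row (T k j)" "dim_col (vcomp T U k j) = dim_col (U k j)"
  by (simp_all add: vcomp_def)

lemma vcomp_eq_empty_arr:
  "(\<And>k j. dim_row (T k j) = 0) \<Longrightarrow> (\<And>k j. dim_col (U k j) = 0) \<Longrightarrow> vcomp T U = empty_arr"
  by (rule empty_arrI) simp_all

lemma dim_row_hcomp_eq_0:
  assumes "\<And>k j. k < dim_row (fst ft) \<Longrightarrow> j < dim_col (fst f) \<Longrightarrow> snd ft' k (col (fst f') j) \<in> carrier_mat 0 0"
  shows "dim_row (hcomp ft ft' f f' Tt T k j) = 0"
proof (cases "k < dim_row (fst ft) \<and> j < dim_col (fst f)")
  case True
  then show ?thesis
    using assms unfolding hcomp_def by (simp only: if_P[OF True] index_mult_mat(2)) auto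
next
  case False
  then show ?thesis
    unfolding hcomp_def by (simp only: if_not_P[OF False]) simp
qed

text \<open>\<open>matinv\<close> is a choice, so its size is known only on invertible arguments such as \<open>1\<^sub>m 0\<close>.\<close>

lemma dim_col_hcomp_eq_0:
  assumes "\<And>k j. k < dim_row (fst ft) \<Longrightarrow> j < dim_col (fst f) \<Longrightarrow> snd ft k (col (fst f) j) \<in> carrier_mat 0 0"
  shows "dim_col (hcomp ft ft' f f' Tt T k j) = 0"
proof (cases "k < dim_row (fst ft) \<and> j < dim_col (fst f)")
  case True
  then have "snd ft k (col (fst f) j) = 1\<^sub>m 0"
    using assms by (intro carrier_mat_0_0_eq) auto
  then show ?thesis
    using True by (simp add: hcomp_def matinv_one_mat)
next
  case False
  then show ?thesis
    unfolding hcomp_def by (simp only: if_not_P[OF False]) simp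
qed

lemma triv_gauge_zero_vec: "dim_col P = m \<Longrightarrow> triv_gauge P k (0\<^sub>v m) = 1\<^sub>m 0"
  by (auto simp: triv_gauge_def)

lemma triv_gauge_one_mat_col:
  "R \<in> carrier_mat n' n \<Longrightarrow> k < n' \<Longrightarrow> j < n \<Longrightarrow> triv_gauge (1\<^sub>m n') k (col R j) = 1\<^sub>m (R $$ (k, j))"
  by (simp add: triv_gauge_def)

lemma gauge_comp_triv_gauge_zero_vec:
  assumes "Rt \<in> carrier_mat m m" and "R \<in> carrier_mat m m"
  shows "gauge_comp PP Rt (triv_gauge Rt) R s k (0\<^sub>v m) \<in> carrier_mat 0 0"
proof (cases "k < dim_row Rt")
  case True
  let ?B1 = "block_diag (map (\<lambda>i. kron (1\<^sub>m (Rt $$ (k, i))) (s i (0\<^sub>v m))) [0..<dim_col Rt])"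
  let ?B2 = "block_diag (map (\<lambda>j. kron (matinv (triv_gauge Rt k (col R j))) (1\<^sub>m (0\<^sub>v m $ j))) [0..<dim_col R])"
  have "gauge_comp PP Rt (triv_gauge Rt) R s k (0\<^sub>v m)
      = triv_gauge Rt k (R *\<^sub>v 0\<^sub>v m) * ?B1 * PP (row Rt k) R (0\<^sub>v m) * ?B2"
    unfolding gauge_comp_def by (rule if_P) (use True assms in auto)
  moreover have "R *\<^sub>v 0\<^sub>v m = 0\<^sub>v m"
    using assms by (intro eq_vecI) auto
  moreover have "triv_gauge Rt k (0\<^sub>v m) = 1\<^sub>m 0"
    using assms by (intro triv_gauge_zero_vec) auto
  moreover have "dim_col ?B2 = 0"
    using assms unfolding dim_col_block_diag by (simp add: sum_list_eq_0_iff)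
  ultimately show ?thesis
    unfolding carrier_mat_def by (simp only: index_mult_mat(2,3) index_one_mat(2)) simp
next
  case False
  then show ?thesis
    unfolding gauge_comp_def by (simp only: if_not_P[OF False]) simp
qed

lemma special_2group_oone_oone: "special_2group G \<Longrightarrow> omul G (oone G) (oone G) = oone G"
  unfolding special_2group_def by (elim conjE) blast

lemma special_2group_tens_mid_oone:
  assumes "special_2group G" and "\<phi> \<in> aut G x"
  shows "mtens G \<phi> (mid G (oone G)) = \<phi>"
proof -
  have "\<forall>x. \<forall>\<phi>\<in>aut G x. mtens G (mid G (oone G)) \<phi> = \<phi> \<and> mtens G \<phi> (mid G (oone G)) = \<phi>"
    using assms(1) unfolding special_2group_def by (elim conjE) assumption
  then show ?thesis
    using assms(2) by blast
qed

lemma gaminv_oone: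
  assumes "special_2group G" and u: "u \<in> pi1 G"
  shows "gaminv G (oone G) u = u"
proof -
  have gam: "gam G (oone G) v = v" if "v \<in> pi1 G" for v
    using special_2group_tens_mid_oone[OF assms(1)] that unfolding gam_def pi1_def by blast
  then have "inj_on (gam G (oone G)) (pi1 G)"
    by (simp add: inj_on_def)
  from the_inv_into_f_f[OF this u] show ?thesis
    by (simp add: gaminv_def gam[OF u])
qed

lemma admissible_permutes: "admissible G n \<rho> \<beta> c \<Longrightarrow> \<rho> g permutes {..<n}"
  unfolding admissible_def by blast

lemma admissible_rho_mult: "admissible G n \<rho> \<beta> c \<Longrightarrow> \<rho> (omul G g h) = \<rho> g \<circ> \<rho> h"
  unfolding admissible_def by blast

lemma admissible_rho_oone:
  assumes "special_2group G" and "admissible G n \<rho> \<beta> c"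
  shows "\<rho> (oone G) = id"
proof
  fix x
  have "\<rho> (oone G) x = (\<rho> (oone G) \<circ> \<rho> (oone G)) x"
    using admissible_rho_mult[OF assms(2), of "oone G" "oone G"]
    unfolding special_2group_oone_oone[OF assms(1)] by (rule fun_cong)
  then have "\<rho> (oone G) (\<rho> (oone G) x) = \<rho> (oone G) x"
    by simp
  then show "\<rho> (oone G) x = id x"
    using permutes_inj[OF admissible_permutes[OF assms(2)]] by (simp add: inj_eq)
qed

section \<open>1-intertwiners between the representations \<open>\<F>(n,\<rho>,\<beta>,c)\<close>\<close>

lemma inv2_entry_invertible:
  assumes "is_2mor m n R R' T" and "inv2 m n R R' T" and "i < m" and "j < n"
    and "R \<in> carrier_mat m n" and "R' \<in> carrier_mat m n"
  obtains T' where "T i j \<in> carrier_mat (R' $$ (i, j)) (R $$ (i, j))"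
    and "T' \<in> carrier_mat (R $$ (i, j)) (R' $$ (i, j))"
    and "T' * T i j = 1\<^sub>m (R $$ (i, j))" and "T i j * T' = 1\<^sub>m (R' $$ (i, j))"
proof -
  obtain T' where T': "is_2mor m n R' R T'" "vcomp T' T = id2 R" "vcomp T T' = id2 R'"
    using assms(2) unfolding inv2_def by blast
  then have "vcomp T' T i j = id2 R i j" "vcomp T T' i j = id2 R' i j"
    by simp_all
  with assms T'(1) show ?thesis
    by (intro that[of "T' i j"]) (auto simp: is_2mor_def vcomp_def id2_def)
qed

lemma inv2_entry_dims_eq:
  fixes R R' :: "nat mat"
  assumes "is_2mor m n R R' T" and "inv2 m n R R' T" and "i < m" and "j < n"
    and "R \<in> carrier_mat m n" and "R' \<in> carrier_mat m n"
  shows "R $$ (i, j) = R' $$ (i, j)"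
proof -
  obtain T' where "T i j \<in> carrier_mat (R' $$ (i, j)) (R $$ (i, j))"
    and "T' \<in> carrier_mat (R $$ (i, j)) (R' $$ (i, j))"
    and "T' * T i j = 1\<^sub>m (R $$ (i, j))" and "T i j * T' = 1\<^sub>m (R' $$ (i, j))"
    using inv2_entry_invertible[OF assms] .
  then show ?thesis
    by (rule mat_inverse_dims_eq)
qed

lemma one_intD:
  assumes "one_int PP G X Y f \<Phi>"
  shows one_int_is_1mor: "is_1mor (rdim X) (rdim Y) f"
    and one_int_is_2mor: "is_2mor (rdim Y) (rdim X) (fst (robj Y A) * fst f) (fst f * fst (robj X A)) (\<Phi> A)"
    and one_int_inv2: "inv2 (rdim Y) (rdim X) (fst (robj Y A) * fst f) (fst f * fst (robj X A)) (\<Phi> A)"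
    and one_int_natural: "\<phi> \<in> aut G A \<Longrightarrow>
      vcomp (\<Phi> A) (hcomp (robj Y A) (robj Y A) f f (rmor Y A \<phi>) (id2 (fst f)))
      = vcomp (hcomp f f (robj X A) (robj X A) (id2 (fst f)) (rmor X A \<phi>)) (\<Phi> A)"
  using assms unfolding one_int_def by blast+

lemma Frep_simps [simp]:
  "rdim (Frep G n \<rho> \<beta> c) = n"
  "robj (Frep G n \<rho> \<beta> c) g = (permmat n (\<rho> g), triv_gauge (permmat n (\<rho> g)))"
  "rmor (Frep G n \<rho> \<beta> c) g \<phi> = (\<lambda>i j. if i < n \<and> j < n \<and> i = \<rho> g j
                          then mat 1 1 (\<lambda>_. \<beta> (gaminv G g \<phi>) i) else 0\<^sub>m 0 0)"
  "rF2 (Frep G n \<rho> \<beta> c) g h = (\<lambda>i j. if i < n \<and> j < n \<and> i = \<rho> (omul G g h) j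
                          then mat 1 1 (\<lambda>_. c g h i) else 0\<^sub>m 0 0)"
  "rF0 (Frep G n \<rho> \<beta> c) = id2 (1\<^sub>m n)"
  by (simp_all add: Frep_def)

lemma hcomp_rmor_oone_id2:
  fixes R :: "nat mat"
  assumes R: "R \<in> carrier_mat n' n" and k: "k < n'" and j: "j < n"
    and \<rho>': "\<rho>' (oone G) = id" and u: "gaminv G (oone G) u = u"
  shows "hcomp (robj (Frep G n' \<rho>' \<beta>' c') (oone G)) (robj (Frep G n' \<rho>' \<beta>' c') (oone G)) (R, s) (R, s)
     (rmor (Frep G n' \<rho>' \<beta>' c') (oone G) u) (id2 R) k j = \<beta>' u k \<cdot>\<^sub>m 1\<^sub>m (R $$ (k, j))"
proof -
  let ?F = "\<lambda>i. kron (if k < n' \<and> i < n' \<and> k = i then mat 1 1 (\<lambda>_. \<beta>' u k) else 0\<^sub>m 0 0) (id2 R i j)"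
  have "block_diag (map ?F [0..<n']) = kron (mat 1 1 (\<lambda>_. \<beta>' u k)) (id2 R k j)"
    using k by (subst block_diag_map_single[OF k]) (auto simp: kron_0_0_left)
  also have "\<dots> = \<beta>' u k \<cdot>\<^sub>m 1\<^sub>m (R $$ (k, j))"
    using k j R by (simp add: id2_def kron_scalar_one_mat[unfolded One_nat_def])
  finally have "block_diag (map ?F [0..<n']) = \<beta>' u k \<cdot>\<^sub>m 1\<^sub>m (R $$ (k, j))" .
  then show ?thesis
    using R k j unfolding hcomp_def Frep_simps fst_conv snd_conv \<rho>' permmat_id u
    by (simp add: triv_gauge_one_mat_col matinv_one_mat)
qed

lemma hcomp_id2_rmor_oone:
  fixes R :: "nat mat"
  assumes f: "is_1mor n n' (R, s)" and k: "k < n'" and j: "j < n"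
    and \<rho>: "\<rho> (oone G) = id" and u: "gaminv G (oone G) u = u"
  shows "hcomp (R, s) (R, s) (robj (Frep G n \<rho> \<beta> c) (oone G)) (robj (Frep G n \<rho> \<beta> c) (oone G))
     (id2 R) (rmor (Frep G n \<rho> \<beta> c) (oone G) u) k j = \<beta> u j \<cdot>\<^sub>m 1\<^sub>m (R $$ (k, j))"
proof -
  have R: "R \<in> carrier_mat n' n" and s: "s k (unit_vec n j) = 1\<^sub>m (R $$ (k, j))"
    using f k j unfolding is_1mor_def by auto
  let ?F = "\<lambda>i. kron (id2 R k i) (if i < n \<and> j < n \<and> i = j then mat 1 1 (\<lambda>_. \<beta> u i) else 0\<^sub>m 0 0)"
  have "block_diag (map ?F [0..<n]) = kron (id2 R k j) (mat 1 1 (\<lambda>_. \<beta> u j))"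
    using j by (subst block_diag_map_single[OF j]) (auto simp: kron_0_0_right)
  also have "\<dots> = \<beta> u j \<cdot>\<^sub>m 1\<^sub>m (R $$ (k, j))"
    using k j R by (simp add: id2_def kron_one_mat_scalar[unfolded One_nat_def])
  finally have "block_diag (map ?F [0..<n]) = \<beta> u j \<cdot>\<^sub>m 1\<^sub>m (R $$ (k, j))" .
  moreover have "col (1\<^sub>m n) j = unit_vec n j"
    using j by (intro eq_vecI) auto
  ultimately show ?thesis
    using R k j unfolding hcomp_def Frep_simps fst_conv snd_conv \<rho> permmat_id u id_apply
    by (simp add: s matinv_one_mat)
qed

lemma rho_invariant_orbit_subset_Supp:
  assumes \<sigma>: "\<And>g. \<rho> g permutes {..<n}" and \<sigma>': "\<And>g. \<rho>' g permutes {..<n'}"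
    and R: "R \<in> carrier_mat n' n" and invariant: "rho_invariant \<rho> \<rho>' n n' R" and x: "x \<in> Supp R"
  shows "orbit \<rho> \<rho>' x \<subseteq> Supp R"
proof
  fix y
  assume "y \<in> orbit \<rho> \<rho>' x"
  then obtain g where y: "y = (Hilbert_Choice.inv (\<rho>' g) (fst x), Hilbert_Choice.inv (\<rho> g) (snd x))"
    unfolding orbit_def by blast
  obtain i' i where x_eq: "x = (i', i)" and i': "i' < n'" and i: "i < n" and nonzero: "R $$ (i', i) \<noteq> 0"
    using x R unfolding Supp_def by auto
  let ?a = "Hilbert_Choice.inv (\<rho>' g) i'" and ?b = "Hilbert_Choice.inv (\<rho> g) i"
  have a: "?a < n'" and b: "?b < n"
    using permutes_in_image[OF permutes_inv[OF \<sigma>']] permutes_in_image[OF permutes_inv[OF \<sigma>]] i' i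
    by auto
  have "R $$ (?a, ?b) = R $$ (\<rho>' g ?a, \<rho> g ?b)"
    using invariant a b unfolding rho_invariant_def by simp
  also have "\<dots> = R $$ (i', i)"
    using permutes_inverses(1)[OF \<sigma>'] permutes_inverses(1)[OF \<sigma>] by simp
  finally show "y \<in> Supp R"
    using y x_eq a b nonzero R unfolding Supp_def by auto
qed

lemma orbit_self:
  "\<rho> e = id \<Longrightarrow> \<rho>' e = id \<Longrightarrow> x \<in> orbit \<rho> \<rho>' x"
  unfolding orbit_def by (intro CollectI exI[of _ e]) simp

lemma rho_invariant_union_of_intertwining_orbits:
  assumes G: "special_2group G" and adm: "admissible G n \<rho> \<beta> c" and adm': "admissible G n' \<rho>' \<beta>' c'"
    and R: "R \<in> carrier_mat n' n" and invariant: "rho_invariant \<rho> \<rho>' n n' R" and sub: "Supp R \<subseteq> I"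
  shows "union_of_intertwining_orbits \<rho> \<rho>' n n' I (Supp R)"
  unfolding union_of_intertwining_orbits_def
proof (intro exI[of _ "Supp R"] conjI ballI)
  have orbit: "orbit \<rho> \<rho>' x \<subseteq> Supp R" if "x \<in> Supp R" for x
    using admissible_permutes[OF adm] admissible_permutes[OF adm'] R invariant that
    by (rule rho_invariant_orbit_subset_Supp)
  show "Supp R \<subseteq> Mset n' n"
    using R unfolding Supp_def Mset_def by auto
  show "orbit \<rho> \<rho>' x \<subseteq> I" if "x \<in> Supp R" for x
    using orbit[OF that] sub by blast
  show "Supp R = \<Union> (orbit \<rho> \<rho>' ` Supp R)"
    using orbit orbit_self[of \<rho> "oone G" \<rho>', OF admissible_rho_oone[OF G adm] admissible_rho_oone[OF G adm']] by blast
qed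

lemma one_int_zero_mor1:
  "one_int PP G (Frep G n \<rho> \<beta> c) (Frep G n' \<rho>' \<beta>' c') (zero_mor1 n' n) (\<lambda>_. empty_arr)"
  unfolding one_int_def
proof (intro conjI allI ballI, goal_cases)
  case 1
  show ?case
    using is_1mor_zero_mor1 by simp
next
  case (2 A)
  show ?case
    by (simp add: is_2mor_zero_iff)
next
  case (3 A)
  show ?case
    by (simp add: inv2_empty_arr)
next
  case (4 A \<phi>)
  show ?case
    by (rule trans[OF vcomp_eq_empty_arr vcomp_eq_empty_arr[symmetric]])
      (auto simp: col_zero_mat triv_gauge_zero_vec intro!: dim_col_hcomp_eq_0 dim_row_hcomp_eq_0)
next
  case (5 A B)
  show ?case
    by (rule trans[OF vcomp_eq_empty_arr vcomp_eq_empty_arr[symmetric]])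
      (auto simp: comp1_def col_zero_mat triv_gauge_zero_vec gauge_comp_triv_gauge_zero_vec
        intro!: dim_col_hcomp_eq_0 dim_row_hcomp_eq_0)
next
  case 6
  show ?case
    by (rule trans[OF empty_arrI vcomp_eq_empty_arr[symmetric]])
      (auto simp: id1_def col_zero_mat triv_gauge_zero_vec intro!: dim_col_hcomp_eq_0 dim_row_hcomp_eq_0)
qed

lemma two_int_zero_mor1_iff:
  "two_int PP (Frep G n \<rho> \<beta> c) (Frep G n' \<rho>' \<beta>' c')
     (zero_mor1 n' n, \<lambda>_. empty_arr) (zero_mor1 n' n, \<lambda>_. empty_arr) \<tau> \<longleftrightarrow> \<tau> = empty_arr"
proof
  assume "two_int PP (Frep G n \<rho> \<beta> c) (Frep G n' \<rho>' \<beta>' c')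
     (zero_mor1 n' n, \<lambda>_. empty_arr) (zero_mor1 n' n, \<lambda>_. empty_arr) \<tau>"
  then show "\<tau> = empty_arr"
    by (simp add: two_int_def is_2mor_zero_iff)
next
  assume "\<tau> = empty_arr"
  then show "two_int PP (Frep G n \<rho> \<beta> c) (Frep G n' \<rho>' \<beta>' c')
     (zero_mor1 n' n, \<lambda>_. empty_arr) (zero_mor1 n' n, \<lambda>_. empty_arr) \<tau>"
    unfolding two_int_def prod.case
    by (intro conjI allI trans[OF vcomp_eq_empty_arr vcomp_eq_empty_arr[symmetric]])
      (auto simp: is_2mor_zero_iff col_zero_mat triv_gauge_zero_vec intro!: dim_col_hcomp_eq_0 dim_row_hcomp_eq_0)
qed

context
  fixes G :: "('g,'m) two_group" and PP
    and n n' :: nat and \<rho> \<rho>' :: "'g \<Rightarrow> nat \<Rightarrow> nat"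
    and \<beta> \<beta>' :: "'m \<Rightarrow> nat \<Rightarrow> complex" and c c' :: "'g \<Rightarrow> 'g \<Rightarrow> nat \<Rightarrow> complex"
    and R :: "nat mat" and s :: gauge and \<Phi> :: "'g \<Rightarrow> arr"
  assumes intertwiner: "one_int PP G (Frep G n \<rho> \<beta> c) (Frep G n' \<rho>' \<beta>' c') (R, s) \<Phi>"
begin

lemma intertwiner_is_1mor: "is_1mor n n' (R, s)"
  using one_int_is_1mor[OF intertwiner] by simp

lemma intertwiner_carrier: "R \<in> carrier_mat n' n"
  using intertwiner_is_1mor by (simp add: is_1mor_def)

lemma intertwiner_2mor:
  "is_2mor n' n (permmat n' (\<rho>' g) * R) (R * permmat n (\<rho> g)) (\<Phi> g)"
  "inv2 n' n (permmat n' (\<rho>' g) * R) (R * permmat n (\<rho> g)) (\<Phi> g)"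
  using one_int_is_2mor[OF intertwiner] one_int_inv2[OF intertwiner] by simp_all

lemma intertwiner_rho_invariant:
  assumes "admissible G n \<rho> \<beta> c" and "admissible G n' \<rho>' \<beta>' c'"
  shows "rho_invariant \<rho> \<rho>' n n' R"
  unfolding rho_invariant_def
proof (intro allI impI)
  fix g i' i
  assume i': "i' < n'" and i: "i < n"
  have \<sigma>: "\<rho> g permutes {..<n}"
    using assms(1) by (rule admissible_permutes)
  have \<sigma>': "\<rho>' g permutes {..<n'}"
    using assms(2) by (rule admissible_permutes)
  then have k: "\<rho>' g i' < n'"
    using permutes_in_image i' by fastforce
  have "R $$ (\<rho>' g i', \<rho> g i) = (R * permmat n (\<rho> g)) $$ (\<rho>' g i', i)"
    using mult_permmat_index[OF \<sigma> intertwiner_carrier k i] by (rule sym)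
  also have "\<dots> = (permmat n' (\<rho>' g) * R) $$ (\<rho>' g i', i)"
    using intertwiner_carrier by (intro inv2_entry_dims_eq[OF intertwiner_2mor k i, symmetric]) auto
  also have "\<dots> = R $$ (i', i)"
    using permmat_mult_index[OF \<sigma>' intertwiner_carrier i' i] .
  finally show "R $$ (\<rho>' g i', \<rho> g i) = R $$ (i', i)" .
qed

lemma intertwiner_Supp_subset_Iset:
  assumes G: "special_2group G" and adm: "admissible G n \<rho> \<beta> c" and adm': "admissible G n' \<rho>' \<beta>' c'"
  shows "Supp R \<subseteq> Iset G n n' \<beta> \<beta>'"
proof
  fix x
  assume "x \<in> Supp R"
  then obtain k j where x: "x = (k, j)" and k: "k < n'" and j: "j < n" and nonzero: "R $$ (k, j) \<noteq> 0"
    using intertwiner_carrier by (auto simp: Supp_def)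
  have \<rho>: "\<rho> (oone G) = id" and \<rho>': "\<rho>' (oone G) = id"
    using admissible_rho_oone[OF G] adm adm' by blast+
  have "\<beta>' u k = \<beta> u j" if u: "u \<in> pi1 G" for u
  proof -
    have "u \<in> aut G (oone G)"
      using u by (simp add: pi1_def)
    from fun_cong[OF fun_cong[OF one_int_natural[OF intertwiner this]], of k j]
    have "\<Phi> (oone G) k j * (\<beta>' u k \<cdot>\<^sub>m 1\<^sub>m (R $$ (k, j))) = (\<beta> u j \<cdot>\<^sub>m 1\<^sub>m (R $$ (k, j))) * \<Phi> (oone G) k j"
      unfolding vcomp_def fst_conv
        hcomp_rmor_oone_id2[where \<rho>' = \<rho>', OF intertwiner_carrier k j \<rho>' gaminv_oone[OF G u]]
        hcomp_id2_rmor_oone[where \<rho> = \<rho>, OF intertwiner_is_1mor k j \<rho> gaminv_oone[OF G u]] .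
    moreover have "is_2mor n' n R R (\<Phi> (oone G))" and "inv2 n' n R R (\<Phi> (oone G))"
      using intertwiner_2mor[of "oone G"] intertwiner_carrier
      by (simp_all add: \<rho> \<rho>' permmat_id)
    then obtain T' where "\<Phi> (oone G) k j \<in> carrier_mat (R $$ (k, j)) (R $$ (k, j))"
      and "T' \<in> carrier_mat (R $$ (k, j)) (R $$ (k, j))" and "T' * \<Phi> (oone G) k j = 1\<^sub>m (R $$ (k, j))"
      using inv2_entry_invertible k j intertwiner_carrier by metis
    ultimately show ?thesis
      using nonzero intertwined_scalars_eq by blast
  qed
  then show "x \<in> Iset G n n' \<beta> \<beta>'"
    using x k j by (simp add: Iset_def)
qed

lemma intertwiner_eq_zero_if_Iset_empty:
  assumes G: "special_2group G" and adm: "admissible G n \<rho> \<beta> c" and adm': "admissible G n' \<rho>' \<beta>' c'"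
    and empty: "Iset G n n' \<beta> \<beta>' = {}"
  shows "(R, s) = zero_mor1 n' n" and "\<Phi> = (\<lambda>_. empty_arr)"
proof -
  have R: "R = 0\<^sub>m n' n"
    using intertwiner_Supp_subset_Iset[OF G adm adm'] empty
    by (intro Supp_empty_imp_zero intertwiner_carrier) blast
  then show "(R, s) = zero_mor1 n' n"
    using is_1mor_zero_gauge intertwiner_is_1mor by simp
  show "\<Phi> = (\<lambda>_. empty_arr)"
  proof
    fix g
    show "\<Phi> g = empty_arr"
      using intertwiner_2mor(1)[of g] by (simp add: R is_2mor_zero_iff)
  qed
qed

end

theorem mainTheorem10:
  fixes G :: "('g,'m) two_group"
    and n n' :: nat and \<rho> \<rho>' :: "'g \<Rightarrow> nat \<Rightarrow> nat"
    and \<beta> \<beta>' :: "'m \<Rightarrow> nat \<Rightarrow> complex" and c c' :: "'g \<Rightarrow> 'g \<Rightarrow> nat \<Rightarrow> complex"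
    and PP :: "nat vec \<Rightarrow> nat mat \<Rightarrow> nat vec \<Rightarrow> complex mat"
  assumes "special_2group G"
    and "admissible G n \<rho> \<beta> c"
    and "admissible G n' \<rho>' \<beta>' c'"
    and "PP_ok PP"
  shows "(\<forall>f \<Phi>. one_int PP G (Frep G n \<rho> \<beta> c) (Frep G n' \<rho>' \<beta>' c') f \<Phi> \<longrightarrow>
            rho_invariant \<rho> \<rho>' n n' (fst f) \<and>
            Supp (fst f) \<subseteq> Iset G n n' \<beta> \<beta>' \<and>
            union_of_intertwining_orbits \<rho> \<rho>' n n' (Iset G n n' \<beta> \<beta>') (Supp (fst f)))
         \<and> (Iset G n n' \<beta> \<beta>' = {} \<longrightarrow>
            int_category_terminal PP G (Frep G n \<rho> \<beta> c) (Frep G n' \<rho>' \<beta>' c'))"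
proof (intro conjI allI impI)
  fix f \<Phi>
  assume one_int: "one_int PP G (Frep G n \<rho> \<beta> c) (Frep G n' \<rho>' \<beta>' c') f \<Phi>"
  obtain R s where f: "f = (R, s)"
    by fastforce
  have intertwiner: "one_int PP G (Frep G n \<rho> \<beta> c) (Frep G n' \<rho>' \<beta>' c') (R, s) \<Phi>"
    using one_int unfolding f .
  have invariant: "rho_invariant \<rho> \<rho>' n n' R"
    using intertwiner assms(2,3) by (rule intertwiner_rho_invariant)
  have support: "Supp R \<subseteq> Iset G n n' \<beta> \<beta>'"
    using intertwiner assms(1-3) by (rule intertwiner_Supp_subset_Iset)
  show "rho_invariant \<rho> \<rho>' n n' (fst f)"
    using invariant f by simp
  show "Supp (fst f) \<subseteq> Iset G n n' \<beta> \<beta>'"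
    using support f by simp
  show "union_of_intertwining_orbits \<rho> \<rho>' n n' (Iset G n n' \<beta> \<beta>') (Supp (fst f))"
    using rho_invariant_union_of_intertwining_orbits[OF assms(1-3) intertwiner_carrier[OF intertwiner]
        invariant support] f by simp
next
  assume empty: "Iset G n n' \<beta> \<beta>' = {}"
  have objects: "{(f, \<Phi>). one_int PP G (Frep G n \<rho> \<beta> c) (Frep G n' \<rho>' \<beta>' c') f \<Phi>}
      = {(zero_mor1 n' n, \<lambda>_. empty_arr)}"
    using one_int_zero_mor1 intertwiner_eq_zero_if_Iset_empty[OF _ assms(1-3) empty] by fastforce
  have "\<exists>!\<tau>. two_int PP (Frep G n \<rho> \<beta> c) (Frep G n' \<rho>' \<beta>' c')
      (zero_mor1 n' n, \<lambda>_. empty_arr) (zero_mor1 n' n, \<lambda>_. empty_arr) \<tau>"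
    unfolding two_int_zero_mor1_iff by simp
  then show "int_category_terminal PP G (Frep G n \<rho> \<beta> c) (Frep G n' \<rho>' \<beta>' c')"
    unfolding int_category_terminal_def terminal_cat_def objects by simp
qed
end
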